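(* Let $C'>1$ and $c_\beta>1$, and suppose $F: (0,\infty) \to [0,\infty)$ satisfies $$F(t) \leq C' \frac{F(t-c_\beta s)}{s}$$ for all $t,s$ with $c_\beta^{-1} t \geq s \geq 1$. If $F(t) \leq 1/t$ for every $t>0$, then there exist constants $c,C>0$ such that $F(t) \leq C \exp(-c t)$ for every $t\geq c_\beta$. *)

theory Defs
  imports "HOL-Analysis.Analysis"
begin

end

theory Submission
  imports Defs
begin

text \<open>Choosing the fixed step \<open>s = 2 C'\<close> in the recursion shows that \<open>F\<close> at least halves
  under every shift by \<open>L = 2 C' c\<^sub>\<beta>\<close>; together with the bound \<open>F \<le> 1\<close> on \<open>[c\<^sub>\<beta>, \<infinity>)\<close>
  this gives decay like \<open>2 powr (- t / L)\<close>.\<close>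

lemma shift_contraction_power_bound:
  fixes f :: "real \<Rightarrow> real" and a L q M :: real
  assumes "L > 0" and "q \<ge> 0"
    and bounded: "\<And>t. t \<ge> a \<Longrightarrow> f t \<le> M"
    and contract: "\<And>t. t \<ge> a + L \<Longrightarrow> f t \<le> q * f (t - L)"
  shows "t \<ge> a + real n * L \<Longrightarrow> f t \<le> q ^ n * M"
proof (induction n arbitrary: t)
  case 0
  then show ?case using bounded by simp
next
  case (Suc n)
  moreover have "L * real n \<ge> 0" using \<open>L > 0\<close> by simp
  ultimately have "t \<ge> a + L" and "t - L \<ge> a + real n * L"
    by (simp_all add: algebra_simps)
  then have "f t \<le> q * f (t - L)" and "f (t - L) \<le> q ^ n * M"
    using contract Suc.IH by auto
  then show ?case
    using \<open>q \<ge> 0\<close> by (metis mult.assoc mult_left_mono order_trans power_Suc)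
qed

lemma shift_contraction_exp_decay:
  fixes f :: "real \<Rightarrow> real" and a L q M :: real
  assumes "L > 0" and "0 < q" "q < 1" and "M > 0"
    and bounded: "\<And>t. t \<ge> a \<Longrightarrow> f t \<le> M"
    and contract: "\<And>t. t \<ge> a + L \<Longrightarrow> f t \<le> q * f (t - L)"
  shows "\<exists>c C. c > 0 \<and> C > 0 \<and> (\<forall>t. t \<ge> a \<longrightarrow> f t \<le> C * exp (- c * t))"
proof (intro exI conjI allI impI)
  define c where "c = - ln q / L"
  have "ln q < 0" using \<open>0 < q\<close> \<open>q < 1\<close> by simp
  then show "c > 0" using \<open>L > 0\<close> by (simp add: c_def divide_neg_pos)
  show "M / q * exp (c * a) > 0" using assms by simp
  fix t assume "t \<ge> a"
  define n where "n = nat \<lfloor>(t - a) / L\<rfloor>"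
  have quotient_nonneg: "(t - a) / L \<ge> 0" using \<open>t \<ge> a\<close> \<open>L > 0\<close> by simp
  have "real n \<le> (t - a) / L" using quotient_nonneg by (simp add: n_def)
  then have "t \<ge> a + real n * L" using \<open>L > 0\<close> by (simp add: field_simps)
  then have "f t \<le> q ^ n * M"
    using shift_contraction_power_bound[of L q a f M] assms by simp
  also have "q ^ n \<le> q powr ((t - a) / L - 1)"
  proof -
    have "(t - a) / L - 1 \<le> real n" using quotient_nonneg by (simp add: n_def)
    then have "q powr real n \<le> q powr ((t - a) / L - 1)"
      using assms(2,3) by (simp add: powr_mono')
    then show ?thesis using \<open>q > 0\<close> by (simp add: powr_realpow)
  qed
  also have "q powr ((t - a) / L - 1) = exp (ln q * ((t - a) / L)) / q"
    unfolding powr_diff using \<open>q > 0\<close> by (simp add: powr_def mult.commute)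
  also have "\<dots> = exp (c * a) / q * exp (- c * t)"
    using \<open>L > 0\<close> by (simp add: c_def mult_exp_exp field_simps)
  finally show "f t \<le> M / q * exp (c * a) * exp (- c * t)"
    using \<open>M > 0\<close> by (simp add: field_simps)
qed

theorem lemma4p1:
  fixes F :: "real \<Rightarrow> real" and C' c\<^sub>\<beta> :: real
  assumes "C' > 1" and "c\<^sub>\<beta> > 1"
    and nonneg: "\<And>t. t > 0 \<Longrightarrow> F t \<ge> 0"
    and rec: "\<And>t s. s \<ge> 1 \<Longrightarrow> t / c\<^sub>\<beta> \<ge> s \<Longrightarrow> t - c\<^sub>\<beta> * s > 0 \<Longrightarrow>
                F t \<le> C' * F (t - c\<^sub>\<beta> * s) / s"
    and bound: "\<And>t. t > 0 \<Longrightarrow> F t \<le> 1 / t"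
  shows "\<exists>c C. c > 0 \<and> C > 0 \<and> (\<forall>t. t \<ge> c\<^sub>\<beta> \<longrightarrow> F t \<le> C * exp (- c * t))"
proof (rule shift_contraction_exp_decay)
  define L where "L = c\<^sub>\<beta> * (2 * C')"
  show "L > 0" using assms(1,2) by (simp add: L_def)
  show "F t \<le> 1" if "t \<ge> c\<^sub>\<beta>" for t
    using bound[of t] that assms(2) by (smt (verit) divide_le_eq_1)
  show "F t \<le> 1 / 2 * F (t - L)" if "t \<ge> c\<^sub>\<beta> + L" for t
  proof -
    have "t / c\<^sub>\<beta> \<ge> 2 * C'" and "t - c\<^sub>\<beta> * (2 * C') > 0"
      using that assms(2) by (auto simp: L_def field_simps)
    then have "F t \<le> C' * F (t - L) / (2 * C')"
      using rec[of "2 * C'" t] assms(1) by (simp add: L_def)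
    then show ?thesis using assms(1) by simp
  qed
qed simp_all

end
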